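(* Let $d\ge 1$ and let $P\subset\mathbb{R}^d$ be a finite set of $n\ge 1$ points. Then there exists $p\in P$ such that $p\in K$ for every skyline $K$ with $|K\cap P|>(1-\frac{1}{2d-1})n$.
   Context: A skyline in $\mathbb{R}^d$ is a set of the form $\{x\in\mathbb{R}^d: a_j\le x_j\le b_j \text{ for } 1\le j\le d-1,\ x_d\le b_d\}$ with real numbers $a_j\le b_j$ ($1\le j\le d-1$) and $b_d$; i.e., an axis-parallel box that is unbounded in the direction of the negative $x_d$-axis. *)

theory Defs
  imports "HOL-Analysis.Analysis"
begin

text \<open>Points of R^d are represented as functions nat => real whose coordinates
  0..d-1 are the d coordinates (coordinate j+1 of the paper is index j) and which vanish
  at all indices >= d.\<close>

definition euclid :: "nat \<Rightarrow> (nat \<Rightarrow> real) set" where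
  "euclid d = {x. \<forall>j\<ge>d. x j = 0}"

definition skyline :: "nat \<Rightarrow> (nat \<Rightarrow> real) \<Rightarrow> (nat \<Rightarrow> real) \<Rightarrow> (nat \<Rightarrow> real) set" where
  "skyline d a b = {x \<in> euclid d. (\<forall>j<d - 1. a j \<le> x j \<and> x j \<le> b j) \<and> x (d - 1) \<le> b (d - 1)}"

definition is_skyline :: "nat \<Rightarrow> (nat \<Rightarrow> real) set \<Rightarrow> bool" where
  "is_skyline d K \<longleftrightarrow> (\<exists>a b. (\<forall>j<d - 1. a j \<le> b j) \<and> K = skyline d a b)"

end

theory Submission
  imports Defs
begin

text \<open>Put c = n/(2d-1). Call a point shallow in direction f if fewer than c points of P lie
  at or below it in f; at most c points are shallow in any one direction. Discarding the points
  shallow in one of the 2(d-1) directions x_j and -x_j (j < d-1) leaves at least c points, and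
  we take p lowest in x_d among them. A skyline K containing more than n - c points of P misses
  fewer than c of them, so it meets every set of at least c points of P: the points below p in
  x_j, those above p in x_j, and the survivors, all of which lie at least as high as p in x_d.
  These witnesses squeeze p between the bounds of K in every coordinate.\<close>

definition shallow_points :: "'a set \<Rightarrow> ('a \<Rightarrow> real) \<Rightarrow> real \<Rightarrow> 'a set" where
  "shallow_points P f c = {p \<in> P. real (card {q \<in> P. f q \<le> f p}) < c}"

lemma card_shallow_points_le:
  assumes "finite P" "0 \<le> c"
  shows "real (card (shallow_points P f c)) \<le> c"
proof (cases "shallow_points P f c = {}")
  case True
  with assms(2) show ?thesis by simp
next
  case False
  let ?S = "shallow_points P f c"
  have "finite ?S" using assms(1) unfolding shallow_points_def by simp
  then obtain p where "is_arg_min (\<lambda>q. - f q) (\<lambda>q. q \<in> ?S) p"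
    using ex_is_arg_min_if_finite[OF _ False] by blast
  then have p: "p \<in> ?S" "\<forall>q\<in>?S. f q \<le> f p"
    unfolding is_arg_min_linorder by auto
  then have "?S \<subseteq> {q \<in> P. f q \<le> f p}"
    unfolding shallow_points_def by blast
  then have "card ?S \<le> card {q \<in> P. f q \<le> f p}"
    using assms(1) by (intro card_mono) auto
  moreover have "real (card {q \<in> P. f q \<le> f p}) < c"
    using p(1) unfolding shallow_points_def by simp
  ultimately show ?thesis by linarith
qed

lemma meets_if_card_Diff_less:
  assumes "finite P" "A \<subseteq> P" "card (P - K) < card A"
  shows "\<exists>q\<in>A. q \<in> K"
proof (rule ccontr)
  assume "\<not> ?thesis"
  then have "A \<subseteq> P - K" using assms(2) by blast
  then have "card A \<le> card (P - K)" using assms(1) by (intro card_mono) auto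
  with assms(3) show False by simp
qed

lemma exists_deep_point:
  fixes F :: "('a \<Rightarrow> real) set" and g :: "'a \<Rightarrow> real"
  assumes "finite P" "finite F" "0 < c" "(real (card F) + 1) * c \<le> real (card P)"
  shows "\<exists>p\<in>P. \<forall>K. real (card (P - K)) < c \<longrightarrow>
           (\<forall>f\<in>F. \<exists>q\<in>P \<inter> K. f q \<le> f p) \<and> (\<exists>q\<in>P \<inter> K. g p \<le> g q)"
proof -
  define S where "S = (\<Union>f\<in>F. shallow_points P f c)"
  define R where "R = P - S"
  have "S \<subseteq> P" unfolding S_def shallow_points_def by auto
  have "real (card S) \<le> (\<Sum>f\<in>F. real (card (shallow_points P f c)))"
    unfolding S_def of_nat_sum[symmetric] of_nat_le_iff by (rule card_UN_le[OF assms(2)])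
  also have "\<dots> \<le> (\<Sum>f\<in>F. c)"
    using assms(1,3) by (intro sum_mono card_shallow_points_le) auto
  finally have "real (card S) \<le> real (card F) * c" by simp
  moreover have "card R = card P - card S"
    unfolding R_def using \<open>S \<subseteq> P\<close> assms(1) by (meson card_Diff_subset finite_subset)
  moreover have "card S \<le> card P" using \<open>S \<subseteq> P\<close> assms(1) by (rule card_mono[rotated])
  ultimately have R_large: "c \<le> real (card R)" using assms(4) by (simp add: algebra_simps)
  have "finite R" unfolding R_def using assms(1) by simp
  moreover have "R \<noteq> {}" using R_large assms(3) by auto
  ultimately obtain p where "is_arg_min g (\<lambda>q. q \<in> R) p"
    using ex_is_arg_min_if_finite[of R g] by blast
  then have p: "p \<in> R" "\<forall>q\<in>R. g p \<le> g q"
    unfolding is_arg_min_linorder by auto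
  have "p \<in> P" using p(1) unfolding R_def by blast
  have deep: "c \<le> real (card {q \<in> P. f q \<le> f p})" if "f \<in> F" for f
  proof -
    have "p \<notin> shallow_points P f c" using p(1) that unfolding R_def S_def by blast
    with \<open>p \<in> P\<close> show ?thesis unfolding shallow_points_def by simp
  qed
  have "(\<forall>f\<in>F. \<exists>q\<in>P \<inter> K. f q \<le> f p) \<and> (\<exists>q\<in>P \<inter> K. g p \<le> g q)"
    if small: "real (card (P - K)) < c" for K
  proof (intro conjI ballI)
    fix f assume "f \<in> F"
    have "card (P - K) < card {q \<in> P. f q \<le> f p}"
      using small deep[OF \<open>f \<in> F\<close>] by linarith
    from meets_if_card_Diff_less[OF assms(1) _ this]
    show "\<exists>q\<in>P \<inter> K. f q \<le> f p" by blast
  next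
    have "card (P - K) < card R" using small R_large by linarith
    from meets_if_card_Diff_less[OF assms(1) _ this] obtain q where "q \<in> R" "q \<in> K"
      unfolding R_def by blast
    then show "\<exists>q\<in>P \<inter> K. g p \<le> g q" using p(2) unfolding R_def by blast
  qed
  with \<open>p \<in> P\<close> show ?thesis by blast
qed

definition skyline_directions :: "nat \<Rightarrow> ((nat \<Rightarrow> real) \<Rightarrow> real) set" where
  "skyline_directions d = (\<lambda>j x. x j) ` {..<d - 1} \<union> (\<lambda>j x. - x j) ` {..<d - 1}"

lemma finite_skyline_directions: "finite (skyline_directions d)"
  unfolding skyline_directions_def by simp

lemma card_skyline_directions_le: "card (skyline_directions d) \<le> 2 * (d - 1)"
proof -
  have "card (skyline_directions d) \<le>
      card ((\<lambda>j x. x j) ` {..<d - 1} :: ((nat \<Rightarrow> real) \<Rightarrow> real) set)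
      + card ((\<lambda>j x. - x j) ` {..<d - 1} :: ((nat \<Rightarrow> real) \<Rightarrow> real) set)"
    unfolding skyline_directions_def by (rule card_Un_le)
  also have "\<dots> \<le> card {..<d - 1} + card {..<d - 1}"
    by (intro add_mono card_image_le) simp_all
  finally show ?thesis by simp
qed

lemma mem_skyline_if_squeezed:
  assumes "p \<in> euclid d"
    and "\<forall>f\<in>skyline_directions d. \<exists>q\<in>skyline d a b. f q \<le> f p"
    and "\<exists>q\<in>skyline d a b. p (d - 1) \<le> q (d - 1)"
  shows "p \<in> skyline d a b"
proof -
  have "a j \<le> p j \<and> p j \<le> b j" if "j < d - 1" for j
  proof
    have "(\<lambda>x. x j) \<in> skyline_directions d"
      unfolding skyline_directions_def using that by blast
    from bspec[OF assms(2) this] obtain q where "q \<in> skyline d a b" "q j \<le> p j" by blast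
    with that show "a j \<le> p j" unfolding skyline_def by force
  next
    have "(\<lambda>x. - x j) \<in> skyline_directions d"
      unfolding skyline_directions_def using that by blast
    from bspec[OF assms(2) this] obtain q where "q \<in> skyline d a b" "- q j \<le> - p j" by blast
    with that show "p j \<le> b j" unfolding skyline_def by force
  qed
  moreover have "p (d - 1) \<le> b (d - 1)"
    using assms(3) unfolding skyline_def by force
  ultimately show ?thesis using assms(1) unfolding skyline_def by blast
qed

theorem corollary2:
  fixes d :: nat and P :: "(nat \<Rightarrow> real) set"
  assumes "d \<ge> 1" and "finite P" and "P \<subseteq> euclid d" and "card P \<ge> 1"
  shows "\<exists>p\<in>P. \<forall>K. is_skyline d K \<and>
            real (card (K \<inter> P)) > (1 - 1 / (2 * real d - 1)) * real (card P)
            \<longrightarrow> p \<in> K"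
proof -
  define c where "c = real (card P) / (2 * real d - 1)"
  have "2 * real d - 1 \<ge> 1" using assms(1) by simp
  then have "0 < c" and P_eq: "real (card P) = (2 * real d - 1) * c"
    using assms(4) unfolding c_def by auto
  have "(real (card (skyline_directions d)) + 1) * c \<le> real (card P)"
    using card_skyline_directions_le[of d] assms(1) \<open>0 < c\<close> P_eq
    by (auto intro!: mult_right_mono)
  then obtain p where "p \<in> P" and p: "\<And>K. real (card (P - K)) < c \<Longrightarrow>
      (\<forall>f\<in>skyline_directions d. \<exists>q\<in>P \<inter> K. f q \<le> f p) \<and> (\<exists>q\<in>P \<inter> K. p (d - 1) \<le> q (d - 1))"
    using exists_deep_point[OF assms(2) finite_skyline_directions[of d] \<open>0 < c\<close>, of "\<lambda>x. x (d - 1)"]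
    by blast
  have "p \<in> K"
    if "is_skyline d K" and large: "real (card (K \<inter> P)) > (1 - 1 / (2 * real d - 1)) * card P" for K
  proof -
    obtain a b where K: "K = skyline d a b"
      using \<open>is_skyline d K\<close> unfolding is_skyline_def by blast
    have "card P = card (P \<inter> K) + card (P - K)"
      using assms(2) by (rule card_Int_Diff)
    moreover have "(1 - 1 / (2 * real d - 1)) * card P = card P - c"
      unfolding c_def using \<open>2 * real d - 1 \<ge> 1\<close> by (simp add: field_simps)
    ultimately have "real (card (P - K)) < c" using large by (simp add: Int_commute)
    with p have "\<forall>f\<in>skyline_directions d. \<exists>q\<in>K. f q \<le> f p" "\<exists>q\<in>K. p (d - 1) \<le> q (d - 1)"
      by auto
    with \<open>p \<in> P\<close> assms(3) show ?thesis unfolding K by (intro mem_skyline_if_squeezed) auto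
  qed
  with \<open>p \<in> P\<close> show ?thesis by blast
qed

end
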